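(* Assume the collections $\mathscr C_{S,i,j}$ satisfy hypotheses (1)–(3) below, and let $\mathscr T\in\mathcal S_{\mathscr C}$. Let $i,j,l\in[5]$ be distinct, $f_1\in\Delta_{(ij)}$ and $f_2\in\Delta_{(il)}$. Then $\mathscr T$ does not have a flip supported on the circuit $X_{ij}^{f_1f_2}=((X_{ij}^{f_1f_2})^+,(X_{ij}^{f_1f_2})^-)$, where $(X_{ij}^{f_1f_2})^+=\{(e_i,f_1),(e_j,f_2)\}$ and $(X_{ij}^{f_1f_2})^-=\{(e_j,f_1),(e_i,f_2)\}$. Hypotheses: for each $S\in\binom{[5]}{4}$ and distinct $i,j\in S$, $\mathscr C_{S,i,j}$ is a collection of zonotopal triangulations $\mathscr T_{i_1i_2i_3}^{f_1f_2f_3}$ with $i_1,i_2,i_3\in S$, such that for each member, with $\{i_4\}=S\setminus\{i_1,i_2,i_3\}$: (1) there exist $f_1'\in\Delta_{(i_1i_4)}$, $f_2'\in\Delta_{(i_2i_4)}$, $f_3'\in\Delta_{(i_3i_4)}$ with $\mathscr T_{i_1i_2i_4}^{f_1f_2'f_1'},\mathscr T_{i_2i_3i_4}^{f_2f_3'f_2'},\mathscr T_{i_3i_1i_4}^{f_3f_1'f_3'}\in\mathscr C_{S,i,j}$; (2) if $i_1=i,i_2=j$, there exist such $f_1',f_2',f_3'$ with $\mathscr T_{i_1i_2i_4}^{f_1f_2'f_1'},\mathscr T_{i_3i_2i_4}^{f_2f_2'f_3'},\mathscr T_{i_1i_3i_4}^{f_3f_3'f_1'}\in\mathscr C_{S,i,j}$;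 and (3) for all distinct $i,j,l\in[5]$ and $f_1\in\Delta_{(ij)}$ there exist $k\in[5]\setminus\{i,j,l\}$, $f_2\in\Delta_{(jk)}$, $f_3\in\Delta_{(ki)}$ with $\mathscr T_{ijk}^{f_1f_2f_3}\in\mathscr C_{[5]\setminus\{l\},i,j}$. $\mathcal S_{\mathscr C}$ is the set of triangulations $\mathscr T$ of $A$ such that (i) every member of every $\mathscr C_{S,i,j}$ is a subset of $\mathscr T$, and (ii) for all $S$, distinct $i,j\in S$, $\mathscr T_{ijk}^{f_1f_2f_3}\in\mathscr C_{S,i,j}$ with $k\in S\setminus\{i,j\}$, $\{l\}=[5]\setminus S$ and $f\in\Delta_{(il)}$, we have $(X_{ijk}^{f_1f_2f_3}\setminus\{(e_i,f_1)\})\cup\{(e_i,f)\}\in\mathscr T$.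
   Context: General conventions. For a finite point set $A\subset\mathbb R^d$: a cell is a subset of $A$; a simplex is an affinely independent cell; a face of a cell $C$ is a subset $F\subseteq C$ which is the set of minimizers on $C$ of some linear functional. A triangulation of $A$ is a collection $\mathscr T$ of simplices of $A$, closed under taking faces, such that for all $\sigma,\sigma'\in\mathscr T$, $\mathrm{conv}(\sigma)\cap\mathrm{conv}(\sigma')=\mathrm{conv}(F)$ for a common face $F$ of $\sigma$ and $\sigma'$, and such that $\bigcup_{\sigma\in\mathscr T}\mathrm{conv}(\sigma)=\mathrm{conv}(A)$. A circuit is a minimal affinely dependent subset $X$; it satisfies an affine dependence $\sum_{x\in X}\lambda_x x=0$, $\sum\lambda_x=0$, all $\lambda_x\neq0$, unique up to scaling, which partitions $X=X^+\cup X^-$ into the points with positive and with negative coefficients; writing $X=(X^+,X^-)$ fixes a choice of sign. Set $\mathscr T_X^+:=\{\sigma\subseteq X:X^+\not\subseteq\sigma\}$ and $\mathscr T_X^-:=\{\sigma\subseteq X:X^-\not\subseteq\sigma\}$. For $C\in\mathscr T$, $\mathrm{link}_{\mathscr T}(C):=\{C'\in\mathscr T: C\cap C'=\emptyset,\ C\cup C'\in\mathscr T\}$. A triangulation $\mathscr T$ of $A$ has a flip supported on the circuit $(X^+,X^-)$, $X\subseteq A$, if $\mathscr T_X^+\subseteq\mathscr T$ and all inclusion-maximal elements of $\mathscr T_X^+$ have the same link $\mathscr L$ in $\mathscr T$. Setting. $\Gamma_5^2$ is the set of unordered pairs $(ij)=(ji)$ of distinct elements of $[5]$. For each $\alpha\in\Gamma_5^2$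 let $\Delta_\alpha$ be a finite set, the sets being pairwise disjoint, and let $\Delta^{n-1}:=\bigcup_\alpha\Delta_\alpha$ be the standard basis of $\mathbb R^n$. Let $e_1,\dots,e_5$ be the standard basis of $\mathbb R^5$ and $A:=\Delta^4\times\Delta^{n-1}=\{(e_i,f):i\in[5],f\in\Delta^{n-1}\}$. For distinct $i_1,\dots,i_t\in[5]$ and distinct $f_1,\dots,f_t\in\Delta^{n-1}$, $X_{i_1\cdots i_t}^{f_1\cdots f_t}$ is the circuit of $A$ with affine dependence $(e_{i_1},f_1)-(e_{i_2},f_1)+(e_{i_2},f_2)-(e_{i_3},f_2)+\dots+(e_{i_t},f_t)-(e_{i_1},f_t)=0$, with $+$ and $-$ parts read off from these signs, and $\mathscr T_{i_1\cdots i_t}^{f_1\cdots f_t}:=\mathscr T^+_{X_{i_1\cdots i_t}^{f_1\cdots f_t}}$. It is called zonotopal if $f_1\in\Delta_{(i_1i_2)},\dots,f_t\in\Delta_{(i_ti_1)}$. *)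

theory Defs
  imports "HOL-Analysis.Analysis"
begin

text \<open>The index set [5] is the numeral type 5. The basis
\<Delta>^{n-1} of R^n is an arbitrary finite type 'f (so n = CARD('f)). The partition
of \<Delta>^{n-1} into the blocks \<Delta>_(ij), (ij) an unordered pair of distinct elements
of [5], is encoded by a labelling lab :: 'f => 5 set with card (lab f) = 2:
f belongs to \<Delta>_(ij) iff lab f = {i,j}.  A point (e_i, f) of A is the pair (i, f);
its embedding into R^5 x R^n is pt (i, f).\<close>

definition Delta :: "('f \<Rightarrow> 5 set) \<Rightarrow> 5 \<Rightarrow> 5 \<Rightarrow> 'f set" where
  "Delta lab i j = {f. lab f = {i, j}}"

definition pt :: "5 \<times> 'f::finite \<Rightarrow> (real^5) \<times> (real^'f)" where
  "pt p = (axis (fst p) 1, axis (snd p) 1)"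

definition cell_face :: "(5 \<times> 'f::finite) set \<Rightarrow> (5 \<times> 'f) set \<Rightarrow> bool" where
  "cell_face F C \<longleftrightarrow> F \<subseteq> C \<and>
     (F = {} \<or> (\<exists>c. F = {x\<in>C. \<forall>y\<in>C. c \<bullet> pt x \<le> c \<bullet> pt y}))"

definition triangulation :: "(5 \<times> 'f::finite) set set \<Rightarrow> bool" where
  "triangulation T \<longleftrightarrow>
     (\<forall>\<sigma>\<in>T. \<not> affine_dependent (pt ` \<sigma>)) \<and>
     (\<forall>\<sigma>\<in>T. \<forall>F. cell_face F \<sigma> \<longrightarrow> F \<in> T) \<and>
     (\<forall>\<sigma>\<in>T. \<forall>\<sigma>'\<in>T. \<exists>F. cell_face F \<sigma> \<and> cell_face F \<sigma>' \<and>
        convex hull (pt ` \<sigma>) \<inter> convex hull (pt ` \<sigma>') = convex hull (pt ` F)) \<and>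
     (\<Union>\<sigma>\<in>T. convex hull (pt ` \<sigma>)) = convex hull (range pt)"

definition Tplus :: "'a set \<Rightarrow> 'a set \<Rightarrow> 'a set set" where
  "Tplus Xp Xm = {\<sigma>. \<sigma> \<subseteq> Xp \<union> Xm \<and> \<not> Xp \<subseteq> \<sigma>}"

definition link :: "'a set set \<Rightarrow> 'a set \<Rightarrow> 'a set set" where
  "link T C = {C'\<in>T. C \<inter> C' = {} \<and> C \<union> C' \<in> T}"

definition maximal_elems :: "'a set set \<Rightarrow> 'a set set" where
  "maximal_elems P = {\<sigma>\<in>P. \<forall>\<sigma>'\<in>P. \<sigma> \<subseteq> \<sigma>' \<longrightarrow> \<sigma>' = \<sigma>}"

definition has_flip :: "'a set set \<Rightarrow> 'a set \<Rightarrow> 'a set \<Rightarrow> bool" where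
  "has_flip T Xp Xm \<longleftrightarrow> Tplus Xp Xm \<subseteq> T \<and>
     (\<exists>L. \<forall>\<sigma>\<in>maximal_elems (Tplus Xp Xm). link T \<sigma> = L)"

definition Xplus :: "5 list \<Rightarrow> 'f list \<Rightarrow> (5 \<times> 'f) set" where
  "Xplus is fs = {(is ! s, fs ! s) | s. s < length is}"

definition Xminus :: "5 list \<Rightarrow> 'f list \<Rightarrow> (5 \<times> 'f) set" where
  "Xminus is fs = {(is ! ((s + 1) mod length is), fs ! s) | s. s < length is}"

definition Xset :: "5 list \<Rightarrow> 'f list \<Rightarrow> (5 \<times> 'f) set" where
  "Xset is fs = Xplus is fs \<union> Xminus is fs"

definition T3 :: "5 \<Rightarrow> 5 \<Rightarrow> 5 \<Rightarrow> 'f \<Rightarrow> 'f \<Rightarrow> 'f \<Rightarrow> (5 \<times> 'f) set set" where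
  "T3 i1 i2 i3 f1 f2 f3 = Tplus (Xplus [i1,i2,i3] [f1,f2,f3]) (Xminus [i1,i2,i3] [f1,f2,f3])"

definition zonotopal3 :: "('f \<Rightarrow> 5 set) \<Rightarrow> 5 \<Rightarrow> 5 \<Rightarrow> 5 \<Rightarrow> 'f \<Rightarrow> 'f \<Rightarrow> 'f \<Rightarrow> bool" where
  "zonotopal3 lab i1 i2 i3 f1 f2 f3 \<longleftrightarrow>
     f1 \<in> Delta lab i1 i2 \<and> f2 \<in> Delta lab i2 i3 \<and> f3 \<in> Delta lab i3 i1"

definition valid_Sij :: "5 set \<Rightarrow> 5 \<Rightarrow> 5 \<Rightarrow> bool" where
  "valid_Sij S i j \<longleftrightarrow> card S = 4 \<and> i \<in> S \<and> j \<in> S \<and> i \<noteq> j"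

definition rep_ok :: "('f \<Rightarrow> 5 set) \<Rightarrow> 5 set \<Rightarrow> 5 \<Rightarrow> 5 \<Rightarrow> 5 \<Rightarrow> 'f \<Rightarrow> 'f \<Rightarrow> 'f \<Rightarrow> bool" where
  "rep_ok lab S i1 i2 i3 f1 f2 f3 \<longleftrightarrow>
     distinct [i1, i2, i3] \<and> {i1, i2, i3} \<subseteq> S \<and> zonotopal3 lab i1 i2 i3 f1 f2 f3"

definition hyp_shape where
  "hyp_shape lab C \<longleftrightarrow> (\<forall>S i j. valid_Sij S i j \<longrightarrow>
     (\<forall>\<tau>\<in>C S i j. \<exists>i1 i2 i3 f1 f2 f3. rep_ok lab S i1 i2 i3 f1 f2 f3 \<and> \<tau> = T3 i1 i2 i3 f1 f2 f3))"

definition hyp1 where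
  "hyp1 lab C \<longleftrightarrow> (\<forall>S i j i1 i2 i3 i4 f1 f2 f3. valid_Sij S i j \<and> rep_ok lab S i1 i2 i3 f1 f2 f3 \<and>
     T3 i1 i2 i3 f1 f2 f3 \<in> C S i j \<and> S - {i1, i2, i3} = {i4} \<longrightarrow>
     (\<exists>f1' f2' f3'. f1' \<in> Delta lab i1 i4 \<and> f2' \<in> Delta lab i2 i4 \<and> f3' \<in> Delta lab i3 i4 \<and>
        T3 i1 i2 i4 f1 f2' f1' \<in> C S i j \<and> T3 i2 i3 i4 f2 f3' f2' \<in> C S i j \<and>
        T3 i3 i1 i4 f3 f1' f3' \<in> C S i j))"

definition hyp2 where
  "hyp2 lab C \<longleftrightarrow> (\<forall>S i j i1 i2 i3 i4 f1 f2 f3. valid_Sij S i j \<and> rep_ok lab S i1 i2 i3 f1 f2 f3 \<and>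
     T3 i1 i2 i3 f1 f2 f3 \<in> C S i j \<and> S - {i1, i2, i3} = {i4} \<and> i1 = i \<and> i2 = j \<longrightarrow>
     (\<exists>f1' f2' f3'. f1' \<in> Delta lab i1 i4 \<and> f2' \<in> Delta lab i2 i4 \<and> f3' \<in> Delta lab i3 i4 \<and>
        T3 i1 i2 i4 f1 f2' f1' \<in> C S i j \<and> T3 i3 i2 i4 f2 f2' f3' \<in> C S i j \<and>
        T3 i1 i3 i4 f3 f3' f1' \<in> C S i j))"

definition hyp3 where
  "hyp3 lab C \<longleftrightarrow> (\<forall>i j l f1. distinct [i, j, l] \<and> f1 \<in> Delta lab i j \<longrightarrow>
     (\<exists>k f2 f3. k \<notin> {i, j, l} \<and> f2 \<in> Delta lab j k \<and> f3 \<in> Delta lab k i \<and>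
        T3 i j k f1 f2 f3 \<in> C (UNIV - {l}) i j))"

definition S_C :: "('f::finite \<Rightarrow> 5 set) \<Rightarrow> (5 set \<Rightarrow> 5 \<Rightarrow> 5 \<Rightarrow> (5 \<times> 'f) set set set)
                   \<Rightarrow> (5 \<times> 'f) set set set" where
  "S_C lab C = {T. triangulation T \<and>
     (\<forall>S i j. valid_Sij S i j \<longrightarrow> (\<forall>\<tau>\<in>C S i j. \<tau> \<subseteq> T)) \<and>
     (\<forall>S i j k l f1 f2 f3 f. valid_Sij S i j \<and> k \<in> S - {i, j} \<and>
        rep_ok lab S i j k f1 f2 f3 \<and> T3 i j k f1 f2 f3 \<in> C S i j \<and>
        UNIV - S = {l} \<and> f \<in> Delta lab i l \<longrightarrow>
        (Xset [i, j, k] [f1, f2, f3] - {(i, f1)}) \<union> {(i, f)} \<in> T)}"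

end

theory Submission
  imports Defs
begin

text \<open>Write \<open>a = (e_j, f1)\<close>, \<open>b = (e_i, f2)\<close>, \<open>x = (e_j, f2)\<close>, \<open>y = (e_i, f1)\<close>, so that
\<open>x + y = a + b\<close>. A flip on this circuit makes \<open>{a, b, x}\<close> and \<open>{a, b, y}\<close> cells of \<open>T\<close> with the
same link, hence every cell \<open>\<rho> \<supseteq> {a, b, x}\<close> has a partner cell \<open>\<rho> - x + y\<close>, and near the
segment \<open>[a, b]\<close> the two families cover the same region. Hypothesis (3) together with
condition (ii) of \<open>S_C\<close> yields a cell \<open>\<sigma> \<supseteq> {a, b}\<close> for which both \<open>\<sigma> + x\<close> and \<open>\<sigma> + y\<close> are
affinely dependent. A relative-interior point of \<open>\<sigma>\<close> close to the midpoint of \<open>[a, b]\<close> lies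
in some \<open>\<rho>\<close> or in its partner, and a cell meeting the relative interior of \<open>\<sigma>\<close> contains
\<open>\<sigma>\<close>; either way \<open>x\<close> or \<open>y\<close> would be adjoined to \<open>\<sigma>\<close> inside a simplex.\<close>

lemma pt_eq_iff [simp]: "pt p = pt q \<longleftrightarrow> p = q"
  by (auto simp: pt_def axis_eq_axis prod_eq_iff)

lemma convex_hull_vertex_mem:
  fixes S :: "'a::real_vector set"
  assumes "\<not> affine_dependent S" "U \<subseteq> S" "x \<in> S" "x \<in> convex hull U"
  shows "x \<in> U"
proof (rule ccontr)
  assume "x \<notin> U"
  with assms(2) have "affine hull U \<subseteq> affine hull (S - {x})"
    by (intro hull_mono) blast
  with assms(1,3,4) show False
    unfolding affine_dependent_def using convex_hull_subset_affine_hull by blast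
qed

lemma affine_dependent_alternating_sum:
  fixes x :: "'a::real_vector"
  assumes "{x, p1, p2, p3, p4, p5} \<subseteq> S" "x \<notin> {p1, p2, p3, p4, p5}"
    and "x = p1 + (p2 - p3) + (p4 - p5)"
  shows "affine_dependent S"
proof -
  have "p1 + 1 *\<^sub>R (p2 - p3) \<in> affine hull (S - {x})"
    by (rule mem_affine_3_minus[OF affine_affine_hull]) (use assms(1,2) in \<open>auto intro: hull_inc\<close>)
  then have "(p1 + 1 *\<^sub>R (p2 - p3)) + 1 *\<^sub>R (p4 - p5) \<in> affine hull (S - {x})"
    by (rule mem_affine_3_minus[OF affine_affine_hull]) (use assms(1,2) in \<open>auto intro: hull_inc\<close>)
  then show ?thesis
    using assms(1,3) unfolding affine_dependent_def by auto
qed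

lemma convex_hull_insert2_obtain:
  fixes X Y :: "'a::real_vector"
  assumes "p \<in> convex hull (insert X (insert Y K))" "K \<noteq> {}"
  obtains \<alpha> \<beta> \<gamma> Z where "0 \<le> \<alpha>" "0 \<le> \<beta>" "0 \<le> \<gamma>" "\<alpha> + \<beta> + \<gamma> = 1" "Z \<in> convex hull K"
    "p = \<alpha> *\<^sub>R X + \<beta> *\<^sub>R Y + \<gamma> *\<^sub>R Z"
proof -
  obtain u v q where uv: "0 \<le> u" "0 \<le> v" "u + v = 1" "p = u *\<^sub>R X + v *\<^sub>R q"
    and "q \<in> convex hull (insert Y K)"
    using assms(1) convex_hull_insert[of "insert Y K" X] by auto
  then obtain u' v' Z where uv': "0 \<le> u'" "0 \<le> v'" "u' + v' = 1" "q = u' *\<^sub>R Y + v' *\<^sub>R Z"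
    and "Z \<in> convex hull K"
    using convex_hull_insert[OF assms(2), of Y] by auto
  moreover have "u + v * u' + v * v' = 1"
    using uv(3) uv'(3) by (simp add: add.assoc flip: distrib_left)
  moreover have "p = u *\<^sub>R X + (v * u') *\<^sub>R Y + (v * v') *\<^sub>R Z"
    using uv(4) uv'(4) by (simp add: scaleR_add_right)
  ultimately show ?thesis
    using that[of u "v * u'" "v * v'" Z] uv(1,2) by simp
qed

lemma convex_hull_insert_circuit:
  fixes X Y A B :: "'a::real_vector"
  assumes XY: "X + Y = A + B" and A: "A \<in> convex hull K" and B: "B \<in> convex hull K"
  shows "convex hull (insert X (insert Y K)) \<subseteq> convex hull (insert X K) \<union> convex hull (insert Y K)"
proof
  define M where "M = (1/2) *\<^sub>R (A + B)"
  have M: "M \<in> convex hull K"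
    unfolding M_def using convexD[OF convex_convex_hull A B, of "1/2" "1/2"]
    by (simp add: scaleR_add_right)
  have combination_in_hull: "\<alpha> *\<^sub>R X' + \<beta> *\<^sub>R Y' + \<gamma> *\<^sub>R Z \<in> convex hull (insert X' K)"
    if "X' + Y' = 2 *\<^sub>R M" "\<beta> \<le> \<alpha>" "0 \<le> \<beta>" "0 \<le> \<gamma>" "\<alpha> + \<beta> + \<gamma> = 1"
      "Z \<in> convex hull K" for X' Y' Z \<alpha> \<beta> \<gamma>
  proof -
    have "(2 * \<beta>) *\<^sub>R M = \<beta> *\<^sub>R (X' + Y')"
      using that(1) by simp
    then have "\<alpha> *\<^sub>R X' + \<beta> *\<^sub>R Y' + \<gamma> *\<^sub>R Z = (\<alpha> - \<beta>) *\<^sub>R X' + (2 * \<beta>) *\<^sub>R M + \<gamma> *\<^sub>R Z"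
      by (simp add: algebra_simps)
    also have "\<dots> \<in> convex hull {X', M, Z}"
      unfolding convex_hull_3 using that(2-5)
      by (intro CollectI exI[of _ "\<alpha> - \<beta>"] exI[of _ "2 * \<beta>"] exI[of _ \<gamma>]) auto
    also have "\<dots> \<subseteq> convex hull (insert X' (convex hull K))"
      using M that(6) by (intro hull_mono) auto
    finally show ?thesis
      by (simp flip: hull_insert)
  qed
  fix p assume "p \<in> convex hull (insert X (insert Y K))"
  moreover have "K \<noteq> {}"
    using A by auto
  ultimately obtain \<alpha> \<beta> \<gamma> Z where coeffs: "0 \<le> \<alpha>" "0 \<le> \<beta>" "0 \<le> \<gamma>" "\<alpha> + \<beta> + \<gamma> = 1"
    and Z: "Z \<in> convex hull K" and p: "p = \<alpha> *\<^sub>R X + \<beta> *\<^sub>R Y + \<gamma> *\<^sub>R Z"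
    by (rule convex_hull_insert2_obtain)
  have XY': "X + Y = 2 *\<^sub>R M" "Y + X = 2 *\<^sub>R M"
    using XY by (simp_all add: M_def add.commute)
  show "p \<in> convex hull (insert X K) \<union> convex hull (insert Y K)"
  proof (cases "\<beta> \<le> \<alpha>")
    case True
    then show ?thesis
      using combination_in_hull[OF XY'(1) True coeffs(2,3,4) Z] p by blast
  next
    case False
    then have "p = \<beta> *\<^sub>R Y + \<alpha> *\<^sub>R X + \<gamma> *\<^sub>R Z" "\<alpha> \<le> \<beta>" "\<beta> + \<alpha> + \<gamma> = 1"
      using p coeffs by (simp_all add: algebra_simps)
    then show ?thesis
      using combination_in_hull[OF XY'(2) _ coeffs(1,3) _ Z] by blast
  qed
qed

lemma convex_combination_circuit_hull:
  fixes X Y A B :: "'a::real_vector"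
  assumes "X + Y = A + B" "A \<in> convex hull K" "B \<in> convex hull K"
    and "P \<in> convex hull (insert X K)" "W \<in> convex hull {X, Y}"
    and "0 \<le> u" "0 \<le> v" "u + v = 1"
  shows "u *\<^sub>R P + v *\<^sub>R W \<in> convex hull (insert X K) \<union> convex hull (insert Y K)"
proof -
  have "convex hull (insert X K) \<subseteq> convex hull (insert X (insert Y K))"
    "convex hull {X, Y} \<subseteq> convex hull (insert X (insert Y K))"
    by (rule hull_mono; blast)+
  then have "u *\<^sub>R P + v *\<^sub>R W \<in> convex hull (insert X (insert Y K))"
    using assms(4-8) by (intro convexD[OF convex_convex_hull]) auto
  then show ?thesis
    using convex_hull_insert_circuit[OF assms(1-3)] by blast
qed

lemma rel_interior_triangle_point:
  fixes A B X :: "'a::euclidean_space"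
  assumes "\<not> affine_dependent {A, B, X}" "distinct [A, B, X]"
  shows "(1/4) *\<^sub>R A + (1/4) *\<^sub>R B + (1/2) *\<^sub>R X \<in> rel_interior (convex hull {A, B, X})"
proof -
  define u where "u z = (if z = X then 1/2 else 1/4 :: real)" for z
  have "(\<forall>z\<in>{A, B, X}. 0 < u z) \<and> sum u {A, B, X} = 1 \<and>
      (\<Sum>z\<in>{A, B, X}. u z *\<^sub>R z) = (1/4) *\<^sub>R A + (1/4) *\<^sub>R B + (1/2) *\<^sub>R X"
    using assms(2) by (simp add: u_def)
  then show ?thesis
    unfolding rel_interior_convex_hull_explicit[OF assms(1)] by blast
qed

lemma circuit_midpoint_identity:
  fixes A B X Y c :: "'a::euclidean_space"
  assumes "X + Y = A + B"
  shows "(1 - t/2) *\<^sub>R ((1/2) *\<^sub>R (A + B)) + (t/2) *\<^sub>R c =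
    (1/2) *\<^sub>R ((1 - t) *\<^sub>R ((1/4) *\<^sub>R A + (1/4) *\<^sub>R B + (1/2) *\<^sub>R X) + t *\<^sub>R c)
    + (1/2) *\<^sub>R (((1 + t)/4) *\<^sub>R X + ((3 - t)/4) *\<^sub>R Y)"
proof -
  have Y: "Y = A + B - X"
    using assms by (simp add: algebra_simps)
  show ?thesis
    unfolding Y by (rule euclidean_eqI) (simp add: inner_add_left inner_diff_left, simp add: field_simps)
qed

lemma finite_closed_family_avoid_ball:
  fixes Q :: "'a::metric_space"
  assumes "finite \<F>" "\<And>K. K \<in> \<F> \<Longrightarrow> closed K"
  obtains \<epsilon> where "\<epsilon> > 0" "\<And>K P. K \<in> \<F> \<Longrightarrow> P \<in> ball Q \<epsilon> \<Longrightarrow> P \<in> K \<Longrightarrow> Q \<in> K"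
proof -
  have "open (- \<Union>{K\<in>\<F>. Q \<notin> K})"
    using assms by (intro open_Compl closed_Union) auto
  moreover have "Q \<in> - \<Union>{K\<in>\<F>. Q \<notin> K}"
    by blast
  ultimately obtain \<epsilon> where "\<epsilon> > 0" "ball Q \<epsilon> \<subseteq> - \<Union>{K\<in>\<F>. Q \<notin> K}"
    using open_contains_ball by blast
  then show ?thesis
    using that by blast
qed

lemma cell_face_of_subset:
  assumes indep: "\<not> affine_dependent (pt ` \<rho>)" and D: "D \<subseteq> \<rho>"
  shows "cell_face D \<rho>"
proof (cases "D = {}")
  case False
  then obtain d where d: "d \<in> D" by blast
  have "convex hull (pt ` D) face_of convex hull (pt ` \<rho>)"
    using face_of_convex_hull_affine_independent[OF indep] D by blast
  moreover have "polyhedron (convex hull (pt ` \<rho>))"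
    by (simp add: polytope_convex_hull polytope_imp_polyhedron)
  ultimately have "convex hull (pt ` D) exposed_face_of convex hull (pt ` \<rho>)"
    using exposed_face_of_polyhedron by blast
  then obtain a b where sup: "convex hull (pt ` \<rho>) \<subseteq> {z. a \<bullet> z \<le> b}"
    and face: "convex hull (pt ` D) = convex hull (pt ` \<rho>) \<inter> {z. a \<bullet> z = b}"
    unfolding exposed_face_of_def by blast
  have le: "a \<bullet> pt v \<le> b" if "v \<in> \<rho>" for v
    using sup hull_inc[of "pt v" "pt ` \<rho>"] that by auto
  have eq: "a \<bullet> pt v = b \<longleftrightarrow> v \<in> D" if "v \<in> \<rho>" for v
  proof
    assume "a \<bullet> pt v = b"
    then have "pt v \<in> convex hull (pt ` D)"
      using face hull_inc[of "pt v" "pt ` \<rho>"] that by auto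
    then have "pt v \<in> pt ` D"
      by (rule convex_hull_vertex_mem[OF indep, rotated 2]) (use D that in auto)
    then show "v \<in> D"
      by auto
  next
    assume "v \<in> D"
    then show "a \<bullet> pt v = b"
      using face hull_inc[of "pt v" "pt ` D"] by auto
  qed
  have "D = {v\<in>\<rho>. \<forall>w\<in>\<rho>. (- a) \<bullet> pt v \<le> (- a) \<bullet> pt w}"
  proof (intro equalityI subsetI)
    fix v assume v: "v \<in> D"
    have "a \<bullet> pt w \<le> a \<bullet> pt v" if "w \<in> \<rho>" for w
      using le[OF that] eq[of v] v D by auto
    then show "v \<in> {v\<in>\<rho>. \<forall>w\<in>\<rho>. (- a) \<bullet> pt v \<le> (- a) \<bullet> pt w}"
      using v D by auto
  next
    fix v assume v: "v \<in> {v\<in>\<rho>. \<forall>w\<in>\<rho>. (- a) \<bullet> pt v \<le> (- a) \<bullet> pt w}"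
    then have "v \<in> \<rho>" "a \<bullet> pt d \<le> a \<bullet> pt v"
      using D d by auto
    moreover have "a \<bullet> pt d = b"
      using eq D d by blast
    ultimately show "v \<in> D"
      using le eq by (metis order_antisym)
  qed
  then show ?thesis
    using D unfolding cell_face_def by blast
qed (simp add: cell_face_def)

lemma
  assumes "triangulation T"
  shows triangulation_indep: "\<sigma> \<in> T \<Longrightarrow> \<not> affine_dependent (pt ` \<sigma>)"
    and triangulation_face: "\<sigma> \<in> T \<Longrightarrow> cell_face F \<sigma> \<Longrightarrow> F \<in> T"
    and triangulation_meet: "\<sigma> \<in> T \<Longrightarrow> \<rho> \<in> T \<Longrightarrow> \<exists>F. cell_face F \<sigma> \<and> cell_face F \<rho> \<and>
           convex hull (pt ` \<sigma>) \<inter> convex hull (pt ` \<rho>) = convex hull (pt ` F)"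
    and triangulation_cover: "(\<Union>\<sigma>\<in>T. convex hull (pt ` \<sigma>)) = convex hull (range pt)"
  using assms unfolding triangulation_def by auto

lemma triangulation_subset_closed:
  assumes "triangulation T" "\<rho> \<in> T" "D \<subseteq> \<rho>"
  shows "D \<in> T"
  using assms by (meson cell_face_of_subset triangulation_face triangulation_indep)

lemma triangulation_subset_if_rel_interior:
  assumes T: "triangulation T" "\<sigma> \<in> T" "\<rho> \<in> T"
    and p: "p \<in> rel_interior (convex hull (pt ` \<sigma>))" "p \<in> convex hull (pt ` \<rho>)"
  shows "\<sigma> \<subseteq> \<rho>"
proof
  fix v assume v: "v \<in> \<sigma>"
  obtain F where F: "cell_face F \<sigma>" "cell_face F \<rho>"
    and meet: "convex hull (pt ` \<sigma>) \<inter> convex hull (pt ` \<rho>) = convex hull (pt ` F)"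
    using triangulation_meet[OF T] by blast
  have F_sub: "F \<subseteq> \<sigma>" "F \<subseteq> \<rho>"
    using F by (auto simp: cell_face_def)
  have indep: "\<not> affine_dependent (pt ` \<sigma>)"
    using triangulation_indep[OF T(1,2)] .
  have "convex hull (pt ` F) face_of convex hull (pt ` \<sigma>)"
    using face_of_convex_hull_affine_independent[OF indep] F_sub by blast
  moreover have "convex hull (pt ` F) \<inter> rel_interior (convex hull (pt ` \<sigma>)) \<noteq> {}"
    using p meet rel_interior_subset by blast
  ultimately have "convex hull (pt ` \<sigma>) \<subseteq> convex hull (pt ` F)"
    using subset_of_face_of by blast
  then have "pt v \<in> convex hull (pt ` F)"
    using v hull_inc[of "pt v" "pt ` \<sigma>"] by blast
  then have "pt v \<in> pt ` F"
    by (rule convex_hull_vertex_mem[OF indep, rotated 2]) (use F_sub v in auto)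
  then show "v \<in> \<rho>"
    using F_sub by auto
qed

lemma rel_interior_point_outside_cell:
  assumes T: "triangulation T" "\<sigma> \<in> T" "\<rho> \<in> T"
    and "z \<in> \<rho>" "affine_dependent (pt ` insert z \<sigma>)"
    and p: "p \<in> rel_interior (convex hull (pt ` \<sigma>))"
  shows "p \<notin> convex hull (pt ` \<rho>)"
proof
  assume "p \<in> convex hull (pt ` \<rho>)"
  then have "pt ` insert z \<sigma> \<subseteq> pt ` \<rho>"
    using triangulation_subset_if_rel_interior[OF T p] assms(4) by blast
  then show False
    using assms(5) triangulation_indep[OF T(1,3)] affine_dependent_subset by blast
qed

lemma triangulation_cell_through_perturbation:
  assumes T: "triangulation T" "\<tau> \<in> T"
    and Q: "Q \<in> rel_interior (convex hull (pt ` \<tau>))" and c: "c \<in> convex hull (range pt)"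
  obtains t \<rho> where "0 < t" "t < 1" "\<rho> \<in> T" "\<tau> \<subseteq> \<rho>"
    "(1 - t) *\<^sub>R Q + t *\<^sub>R c \<in> convex hull (pt ` \<rho>)"
proof -
  obtain \<epsilon> where \<epsilon>: "\<epsilon> > 0" and avoid: "\<And>K P. K \<in> (\<lambda>\<rho>. convex hull (pt ` \<rho>)) ` T \<Longrightarrow>
      P \<in> ball Q \<epsilon> \<Longrightarrow> P \<in> K \<Longrightarrow> Q \<in> K"
    by (rule finite_closed_family_avoid_ball[of "(\<lambda>\<rho>. convex hull (pt ` \<rho>)) ` T" Q])
      (auto intro!: compact_imp_closed finite_imp_compact_convex_hull)
  define t where "t = min (1/2) (\<epsilon> / (norm (c - Q) + 1))"
  have t: "0 < t" "t < 1"
    using \<epsilon> by (auto simp: t_def add_nonneg_pos)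
  have "t * norm (c - Q) \<le> \<epsilon> / (norm (c - Q) + 1) * norm (c - Q)"
    by (intro mult_right_mono) (auto simp: t_def)
  also have "\<dots> < \<epsilon>"
    using \<epsilon> by (simp add: divide_less_eq add_nonneg_pos)
  finally have "t * norm (c - Q) < \<epsilon>" .
  moreover have "dist Q ((1 - t) *\<^sub>R Q + t *\<^sub>R c) = norm (t *\<^sub>R (c - Q))"
    by (simp add: dist_norm norm_minus_commute algebra_simps)
  ultimately have P_near: "(1 - t) *\<^sub>R Q + t *\<^sub>R c \<in> ball Q \<epsilon>"
    using t by simp
  have "Q \<in> convex hull (range pt)"
    using Q rel_interior_subset hull_mono[of "pt ` \<tau>" "range pt"] by blast
  then have "(1 - t) *\<^sub>R Q + t *\<^sub>R c \<in> convex hull (range pt)"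
    using c t by (intro convexD) auto
  then obtain \<rho> where \<rho>: "\<rho> \<in> T" "(1 - t) *\<^sub>R Q + t *\<^sub>R c \<in> convex hull (pt ` \<rho>)"
    using triangulation_cover[OF T(1)] by blast
  then have "\<tau> \<subseteq> \<rho>"
    using avoid[OF imageI[OF \<rho>(1)] P_near] triangulation_subset_if_rel_interior[OF T \<rho>(1) Q] by blast
  then show ?thesis
    using that t \<rho> by blast
qed

lemma link_eq_exchange_cell:
  assumes T: "triangulation T" and \<rho>: "\<rho> \<in> T" "{a, b, x} \<subseteq> \<rho>"
    and link_eq: "link T {a, b, x} = link T {a, b, y}"
    and distinct: "distinct [a, b, x, y]"
  shows "insert y (\<rho> - {x}) \<in> T"
proof -
  have "\<rho> - {a, b, x} \<in> link T {a, b, x}"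
    using \<rho> triangulation_subset_closed[OF T \<rho>(1)] unfolding link_def
    by (auto simp: Un_absorb1)
  then have "{a, b, y} \<union> (\<rho> - {a, b, x}) \<in> T"
    using link_eq unfolding link_def by blast
  moreover have "{a, b, y} \<union> (\<rho> - {a, b, x}) = insert y (\<rho> - {x})"
    using \<rho>(2) distinct by auto
  ultimately show ?thesis
    by simp
qed

lemma equal_links_exclude_dependent_cell:
  fixes T :: "(5 \<times> 'f::finite) set set"
  assumes T: "triangulation T" and Tx: "{a, b, x} \<in> T"
    and link_eq: "link T {a, b, x} = link T {a, b, y}"
    and distinct: "distinct [a, b, x, y]"
    and circuit: "pt x + pt y = pt a + pt b"
    and \<sigma>: "\<sigma> \<in> T" "a \<in> \<sigma>" "b \<in> \<sigma>"
    and dep_x: "affine_dependent (pt ` insert x \<sigma>)" and dep_y: "affine_dependent (pt ` insert y \<sigma>)"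
  shows False
proof -
  obtain c where c: "c \<in> rel_interior (convex hull (pt ` \<sigma>))"
    using \<sigma>(2) rel_interior_eq_empty[of "convex hull (pt ` \<sigma>)"] by auto
  define Q where "Q = (1/4) *\<^sub>R pt a + (1/4) *\<^sub>R pt b + (1/2) *\<^sub>R pt x"
  have Q: "Q \<in> rel_interior (convex hull (pt ` {a, b, x}))"
    unfolding Q_def using rel_interior_triangle_point[of "pt a" "pt b" "pt x"]
      triangulation_indep[OF T Tx] distinct by simp
  have "c \<in> convex hull (range pt)"
    using c rel_interior_subset hull_mono[of "pt ` \<sigma>" "range pt"] by blast
  then obtain t \<rho> where t: "0 < t" "t < 1" and \<rho>: "\<rho> \<in> T" "{a, b, x} \<subseteq> \<rho>"
    and P: "(1 - t) *\<^sub>R Q + t *\<^sub>R c \<in> convex hull (pt ` \<rho>)"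
    using triangulation_cell_through_perturbation[OF T Tx Q] by blast
  define \<rho>' where "\<rho>' = insert y (\<rho> - {x})"
  have \<rho>': "\<rho>' \<in> T"
    unfolding \<rho>'_def using link_eq_exchange_cell[OF T \<rho> link_eq distinct] .
  define M where "M = (1/2) *\<^sub>R (pt a + pt b)"
  define R where "R = (1 - t/2) *\<^sub>R M + (t/2) *\<^sub>R c"
  have "M \<in> convex hull (pt ` \<sigma>)"
    unfolding M_def using \<sigma> convexD[OF convex_convex_hull, of "pt a" "pt ` \<sigma>" "pt b" "1/2" "1/2"]
    by (simp add: hull_inc scaleR_add_right)
  then have R_rel: "R \<in> rel_interior (convex hull (pt ` \<sigma>))"
    using rel_interior_convex_shrink[OF convex_convex_hull c _, of M "t/2"] t
    by (simp add: R_def algebra_simps)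
  \<comment> \<open>\<open>R\<close> is the midpoint of the perturbed point and a point of the segment \<open>[x, y]\<close>.\<close>
  have "R = (1/2) *\<^sub>R ((1 - t) *\<^sub>R Q + t *\<^sub>R c) + (1/2) *\<^sub>R (((1 + t)/4) *\<^sub>R pt x + ((3 - t)/4) *\<^sub>R pt y)"
    unfolding R_def M_def Q_def by (rule circuit_midpoint_identity[OF circuit])
  also have "\<dots> \<in> convex hull (insert (pt x) (pt ` (\<rho> - {x}))) \<union> convex hull (insert (pt y) (pt ` (\<rho> - {x})))"
  proof (rule convex_combination_circuit_hull[OF circuit])
    show "(1 - t) *\<^sub>R Q + t *\<^sub>R c \<in> convex hull (insert (pt x) (pt ` (\<rho> - {x})))"
      using P \<rho>(2) by (simp add: insert_absorb flip: image_insert)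
    show "((1 + t)/4) *\<^sub>R pt x + ((3 - t)/4) *\<^sub>R pt y \<in> convex hull {pt x, pt y}"
      by (intro convexD[OF convex_convex_hull]) (use t in \<open>auto intro: hull_inc simp: field_simps\<close>)
  qed (use \<rho>(2) distinct in \<open>auto intro: hull_inc\<close>)
  also have "\<dots> = convex hull (pt ` \<rho>) \<union> convex hull (pt ` \<rho>')"
    using \<rho>(2) by (simp add: \<rho>'_def insert_absorb flip: image_insert)
  finally show False
    using rel_interior_point_outside_cell[OF T \<sigma>(1) \<rho>(1) _ dep_x R_rel]
      rel_interior_point_outside_cell[OF T \<sigma>(1) \<rho>' _ dep_y R_rel] \<rho>(2)
    by (auto simp: \<rho>'_def)
qed

lemma Xplus_two: "Xplus [p, q] [g, h] = {(p, g), (q, h)}"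
proof -
  have "{s. s < length [p, q]} = {0, 1}"
    by auto
  then show ?thesis
    unfolding Xplus_def by (simp add: setcompr_eq_image)
qed

lemma Xminus_two: "Xminus [p, q] [g, h] = {(q, g), (p, h)}"
proof -
  have "{s. s < length [p, q]} = {0, 1}"
    by auto
  then show ?thesis
    unfolding Xminus_def by (simp add: setcompr_eq_image)
qed

lemma Xset_three: "Xset [p, q, r] [g, h, k] = {(p, g), (q, h), (r, k), (q, g), (r, h), (p, k)}"
proof -
  have "{s. s < length [p, q, r]} = {0, 1, 2}"
    by auto
  then show ?thesis
    unfolding Xset_def Xplus_def Xminus_def by (auto simp: setcompr_eq_image)
qed

lemma has_flip_two_circuit:
  assumes "has_flip T {p, q} {r, s}" "distinct [p, q, r, s]"
  shows "{r, s, q} \<in> T" "{r, s, p} \<in> T" "link T {r, s, q} = link T {r, s, p}"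
proof -
  obtain L where sub: "Tplus {p, q} {r, s} \<subseteq> T"
    and L: "\<forall>\<tau>\<in>maximal_elems (Tplus {p, q} {r, s}). link T \<tau> = L"
    using assms(1) unfolding has_flip_def by blast
  have "{r, s, q} \<in> maximal_elems (Tplus {p, q} {r, s})" "{r, s, p} \<in> maximal_elems (Tplus {p, q} {r, s})"
    unfolding maximal_elems_def Tplus_def using assms(2) by auto
  then show "{r, s, q} \<in> T" "{r, s, p} \<in> T" "link T {r, s, q} = link T {r, s, p}"
    using sub L unfolding maximal_elems_def by auto
qed

lemma exchanged_cell_extensions_dependent:
  assumes "distinct [i, j, k]" "distinct [f1, f2, g2, g3]"
    and \<sigma>: "\<sigma> = {(j, f1), (i, f2), (j, g2), (k, g2), (k, g3), (i, g3)}"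
  shows "affine_dependent (pt ` insert (j, f2) \<sigma>)" "affine_dependent (pt ` insert (i, f1) \<sigma>)"
proof -
  show "affine_dependent (pt ` insert (j, f2) \<sigma>)"
  proof (rule affine_dependent_alternating_sum)
    show "pt (j, f2) = pt (i, f2) + (pt (j, g2) - pt (k, g2)) + (pt (k, g3) - pt (i, g3))"
      by (simp add: pt_def algebra_simps)
  qed (use assms in auto)
  show "affine_dependent (pt ` insert (i, f1) \<sigma>)"
  proof (rule affine_dependent_alternating_sum)
    show "pt (i, f1) = pt (j, f1) + (pt (k, g2) - pt (j, g2)) + (pt (i, g3) - pt (k, g3))"
      by (simp add: pt_def algebra_simps)
  qed (use assms in auto)
qed

lemma S_C_exchanged_cell:
  assumes T: "T \<in> S_C lab C" and hyp3: "hyp3 lab C" and ijl: "distinct [i, j, l]"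
    and f1: "f1 \<in> Delta lab i j" and f2: "f2 \<in> Delta lab i l"
  obtains k g2 g3 where "k \<notin> {i, j, l}" "g2 \<in> Delta lab j k" "g3 \<in> Delta lab k i"
    "{(j, f1), (i, f2), (j, g2), (k, g2), (k, g3), (i, g3)} \<in> T"
proof -
  obtain k g2 g3 where k: "k \<notin> {i, j, l}" and g: "g2 \<in> Delta lab j k" "g3 \<in> Delta lab k i"
    and C: "T3 i j k f1 g2 g3 \<in> C (UNIV - {l}) i j"
    using hyp3 ijl f1 unfolding hyp3_def by blast
  have "valid_Sij (UNIV - {l}) i j \<and> k \<in> (UNIV - {l}) - {i, j} \<and>
      rep_ok lab (UNIV - {l}) i j k f1 g2 g3 \<and> T3 i j k f1 g2 g3 \<in> C (UNIV - {l}) i j \<and>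
      UNIV - (UNIV - {l}) = {l} \<and> f2 \<in> Delta lab i l"
    using ijl k f1 f2 g C
    by (auto simp: valid_Sij_def card_Diff_singleton rep_ok_def zonotopal3_def)
  then have "(Xset [i, j, k] [f1, g2, g3] - {(i, f1)}) \<union> {(i, f2)} \<in> T"
    using conjunct2[OF conjunct2[OF T[unfolded S_C_def mem_Collect_eq]]] by blast
  moreover have "g3 \<noteq> f1"
    using g f1 ijl k by (auto simp: Delta_def doubleton_eq_iff)
  then have fresh: "(i, f1) \<notin> {(j, g2), (k, g3), (j, f1), (k, g2), (i, g3)}"
    using ijl k by auto
  then have "(Xset [i, j, k] [f1, g2, g3] - {(i, f1)}) \<union> {(i, f2)} =
      {(j, f1), (i, f2), (j, g2), (k, g2), (k, g3), (i, g3)}"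
    unfolding Xset_three Diff_insert_absorb[OF fresh] by blast
  ultimately show ?thesis
    using that k g by simp
qed

theorem proposition5p6:
  fixes lab :: "'f::finite \<Rightarrow> 5 set"
    and C :: "5 set \<Rightarrow> 5 \<Rightarrow> 5 \<Rightarrow> (5 \<times> 'f) set set set"
    and T :: "(5 \<times> 'f) set set"
    and i j l :: 5 and f1 f2 :: 'f
  assumes "\<forall>f. card (lab f) = 2"
    and "hyp_shape lab C" and "hyp1 lab C" and "hyp2 lab C" and "hyp3 lab C"
    and "T \<in> S_C lab C"
    and "distinct [i, j, l]"
    and "f1 \<in> Delta lab i j" and "f2 \<in> Delta lab i l"
  shows "\<not> has_flip T (Xplus [i, j] [f1, f2]) (Xminus [i, j] [f1, f2])"
proof
  \<comment> \<open>Only hypothesis (3) and condition (ii) of \<open>S_C\<close> are needed.\<close>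
  assume flip: "has_flip T (Xplus [i, j] [f1, f2]) (Xminus [i, j] [f1, f2])"
  obtain k g2 g3 where k: "k \<notin> {i, j, l}" and g: "g2 \<in> Delta lab j k" "g3 \<in> Delta lab k i"
    and \<sigma>: "{(j, f1), (i, f2), (j, g2), (k, g2), (k, g3), (i, g3)} \<in> T"
    using S_C_exchanged_cell[OF assms(6,5,7,8,9)] by blast
  have ijk: "distinct [i, j, k]"
    using assms(7) k by auto
  have fs: "distinct [f1, f2, g2, g3]"
    using assms(7-9) k g by (auto simp: Delta_def doubleton_eq_iff)
  have cells: "{(j, f1), (i, f2), (j, f2)} \<in> T"
    "link T {(j, f1), (i, f2), (j, f2)} = link T {(j, f1), (i, f2), (i, f1)}"
    using has_flip_two_circuit[OF flip[unfolded Xplus_two Xminus_two]] ijk fs by auto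
  have "triangulation T"
    using assms(6) by (simp add: S_C_def)
  moreover have "pt (j, f2) + pt (i, f1) = pt (j, f1) + pt (i, f2)"
    by (simp add: pt_def algebra_simps)
  ultimately show False
    using equal_links_exclude_dependent_cell[OF _ cells _ _ \<sigma> _ _
        exchanged_cell_extensions_dependent[OF ijk fs refl]] ijk fs
    by auto
qed

end
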